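(* Let $\alpha\in(0,1)\cup(1,\infty)$, $\beta=\alpha/(\alpha-1)$, and consider the $\alpha$-loss $\ell_\alpha(\mathrm{h},(x,y))=\beta\big(1-\mathrm{h}(y|x)^{1/\beta}\big)$, with score $L(\mathrm{q},y)=\beta(1-\mathrm{q}(y)^{1/\beta})$. Then, for $\mathbf{a},\mathbf{b}\in\mathbb{R}^m$, the problem $\mathscr{P}_{\ell_\alpha}^{\mathbf{a},\mathbf{b}}$ is equivalent to $$\mathscr{P}_{\alpha}^{\mathbf{a},\mathbf{b}}:\ \min_{\boldsymbol{\mu},\boldsymbol{\eta},\nu}\ \tfrac{1}{2}(\mathbf{b}-\mathbf{a})^{\mathrm{T}}\boldsymbol{\eta}-\tfrac{1}{2}(\mathbf{b}+\mathbf{a})^{\mathrm{T}}\boldsymbol{\mu}-\nu\ \text{ s.t. }\sum_{y\in\mathcal{Y}}\Big(\frac{\Phi(x,y)^{\mathrm{T}}\boldsymbol{\mu}+\nu}{\beta}+1\Big)_+^{\beta}\leq 1\ \forall x\in\mathcal{X},\ \boldsymbol{\eta}+\boldsymbol{\mu}\succeq\mathbf{0},\ \boldsymbol{\eta}-\boldsymbol{\mu}\succeq\mathbf{0}.$$ In addition, for a solution $\boldsymbol{\mu}^*,\boldsymbol{\eta}^*,\nu^*$ of $\mathscr{P}_{\alpha}^{\mathbf{a},\mathbf{b}}$, the condition $\ell_\alpha(\mathrm{h},(x,y))+\Phi(x,y)^{\mathrm{T}}\boldsymbol{\mu}^*+\nu^*\leq 0$ for all $x\in\mathcal{X},y\in\mathcal{Y}$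 (which makes $\mathrm{h}$ an $\ell_\alpha$-MRC for $\mathcal{U}^{\mathbf{a},\mathbf{b}}$) becomes $$\mathrm{h}(y|x)\geq \Big(\frac{\Phi(x,y)^{\mathrm{T}}\boldsymbol{\mu}^*+\nu^*}{\beta}+1\Big)_+^{\beta}\quad\forall x\in\mathcal{X},y\in\mathcal{Y}.$$
   Context: Let $\mathcal{X},\mathcal{Y}$ be finite nonempty sets, $\mathcal{Y}=\{1,\dots,|\mathcal{Y}|\}$; $\Delta(\mathcal{Y})$ is the set of probability distributions on $\mathcal{Y}$. A classification rule $\mathrm{h}$ assigns to each $x$ a distribution $\mathrm{h}(\cdot|x)\in\Delta(\mathcal{Y})$. For a score function $L$ with loss $\ell(\mathrm{h},(x,y))=L(\mathrm{h}(\cdot|x),y)$: $\Phi:\mathcal{X}\times\mathcal{Y}\to\mathbb{R}^m$ is a feature mapping, $\boldsymbol{\Phi}(x,\cdot)$ is the $|\mathcal{Y}|\times m$ matrix with rows $\Phi(x,y)^{\mathrm{T}}$, $\mathbf{1}$ the all-ones vector, $\preceq,\succeq$ componentwise, $\mathcal{L}=\{\mathbf{c}\in\mathbb{R}^{|\mathcal{Y}|}:\exists\,\mathrm{q}\in\Delta(\mathcal{Y}),\ \mathbf{c}+(L(\mathrm{q},y))_y\preceq\mathbf{0}\}$, and $\mathscr{P}_{\ell}^{\mathbf{a},\mathbf{b}}$ is $\min_{\boldsymbol{\mu},\boldsymbol{\eta},\nu}\tfrac12(\mathbf{b}-\mathbf{a})^{\mathrm{T}}\boldsymbol{\eta}-\tfrac12(\mathbf{b}+\mathbf{a})^{\mathrm{T}}\boldsymbol{\mu}-\nu$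 s.t. $\boldsymbol{\Phi}(x,\cdot)\boldsymbol{\mu}+\nu\mathbf{1}\in\mathcal{L}$ $\forall x$, $\boldsymbol{\eta}\pm\boldsymbol{\mu}\succeq\mathbf{0}$. $\mathcal{U}^{\mathbf{a},\mathbf{b}}=\{\mathrm{p}\in\Delta(\mathcal{X}\times\mathcal{Y}):\mathbf{a}\preceq\mathbb{E}_{\mathrm{p}}\{\Phi\}\preceq\mathbf{b}\}$; an $\ell$-MRC for $\mathcal{U}$ minimizes $\max_{\mathrm{p}\in\mathcal{U}}\sum_{x,y}\mathrm{p}(x,y)\ell(\mathrm{h},(x,y))$ over all classification rules. In expressions $(\cdot)_+^\beta$ the positive part is taken before the power. *)

theory Defs
  imports "HOL-Analysis.Analysis" "HOL-Library.Extended_Real"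
begin

definition Delta :: "('y::finite \<Rightarrow> real) set" where
  "Delta = {q. (\<forall>y. 0 \<le> q y) \<and> (\<Sum>y\<in>UNIV. q y) = 1}"

definition classif_rule :: "('x \<Rightarrow> 'y::finite \<Rightarrow> real) \<Rightarrow> bool" where
  "classif_rule h \<longleftrightarrow> (\<forall>x. h x \<in> Delta)"

text \<open>Extended power t^p for t \<ge> 0, with the conventions 0^p = 0 for p > 0,
  0^p = +\<infinity> for p < 0, 0^0 = 1.\<close>
definition epow :: "real \<Rightarrow> real \<Rightarrow> ereal" where
  "epow t p = (if 0 < t then ereal (t powr p)
               else if 0 < p then 0 else if p = 0 then 1 else \<infinity>)"

definition Lset :: "(('y::finite \<Rightarrow> real) \<Rightarrow> 'y \<Rightarrow> ereal) \<Rightarrow> ('y \<Rightarrow> real) set" where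
  "Lset L = {c. \<exists>q\<in>Delta. \<forall>y. ereal (c y) + L q y \<le> 0}"

definition mrc_obj :: "real^'m \<Rightarrow> real^'m \<Rightarrow> ((real^'m) \<times> (real^'m) \<times> real) \<Rightarrow> real" where
  "mrc_obj a b s = (case s of (\<mu>, \<eta>, \<nu>) \<Rightarrow>
      (1/2) * ((b - a) \<bullet> \<eta>) - (1/2) * ((b + a) \<bullet> \<mu>) - \<nu>)"

definition P_feasible :: "(('y::finite \<Rightarrow> real) \<Rightarrow> 'y \<Rightarrow> ereal) \<Rightarrow> ('x \<Rightarrow> 'y \<Rightarrow> real^'m)
      \<Rightarrow> ((real^'m) \<times> (real^'m) \<times> real) set" where
  "P_feasible L \<Phi> = {(\<mu>, \<eta>, \<nu>).
      (\<forall>x. (\<lambda>y. \<Phi> x y \<bullet> \<mu> + \<nu>) \<in> Lset L) \<and>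
      (\<forall>i. 0 \<le> \<eta>$i + \<mu>$i \<and> 0 \<le> \<eta>$i - \<mu>$i)}"

definition Palpha_feasible :: "real \<Rightarrow> ('x \<Rightarrow> 'y::finite \<Rightarrow> real^'m)
      \<Rightarrow> ((real^'m) \<times> (real^'m) \<times> real) set" where
  "Palpha_feasible \<beta> \<Phi> = {(\<mu>, \<eta>, \<nu>).
      (\<forall>x. (\<Sum>y\<in>UNIV. epow (max 0 ((\<Phi> x y \<bullet> \<mu> + \<nu>) / \<beta> + 1)) \<beta>) \<le> 1) \<and>
      (\<forall>i. 0 \<le> \<eta>$i + \<mu>$i \<and> 0 \<le> \<eta>$i - \<mu>$i)}"

definition is_solution :: "('s \<Rightarrow> real) \<Rightarrow> 's set \<Rightarrow> 's \<Rightarrow> bool" where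
  "is_solution obj F s \<longleftrightarrow> s \<in> F \<and> (\<forall>t\<in>F. obj s \<le> obj t)"

definition alpha_score :: "real \<Rightarrow> ('y \<Rightarrow> real) \<Rightarrow> 'y \<Rightarrow> ereal" where
  "alpha_score \<beta> q y = ereal \<beta> * (1 - epow (q y) (1 / \<beta>))"

definition alpha_loss :: "real \<Rightarrow> ('x \<Rightarrow> 'y \<Rightarrow> real) \<Rightarrow> 'x \<Rightarrow> 'y \<Rightarrow> ereal" where
  "alpha_loss \<beta> h x y = alpha_score \<beta> (h x) y"

end

theory Submission
  imports Defs
begin

text \<open>Write \<open>c = \<Phi>(x,y)\<^sup>T\<mu> + \<nu>\<close>. Substituting \<open>u = q(y) powr (1/\<beta>)\<close>, i.e. \<open>q(y) = u powr \<beta>\<close>,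
  the score constraint \<open>c + \<beta> (1 - u) \<le> 0\<close> becomes \<open>(c/\<beta> + 1)\<^sub>+ powr \<beta> \<le> q(y)\<close>: dividing by
  \<open>\<beta>\<close> flips the inequality exactly when \<open>t \<mapsto> t powr \<beta>\<close> is decreasing. So \<open>c\<close> lies in \<open>\<L>\<close>
  iff some distribution dominates these thresholds, i.e. iff they sum to at most 1 (spread
  the slack uniformly). Hence both problems have the same feasible set, and the MRC
  condition translates label by label.\<close>

lemma powr_le_powr_iff_pos:
  fixes p x y :: real
  shows "0 < p \<Longrightarrow> 0 \<le> x \<Longrightarrow> 0 \<le> y \<Longrightarrow> x powr p \<le> y powr p \<longleftrightarrow> x \<le> y"
  by (meson not_le powr_less_mono2 powr_mono2 less_imp_le)

lemma powr_le_powr_iff_neg: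
  fixes p x y :: real
  shows "p < 0 \<Longrightarrow> 0 < x \<Longrightarrow> 0 < y \<Longrightarrow> x powr p \<le> y powr p \<longleftrightarrow> y \<le> x"
  by (meson not_le powr_less_mono2_neg powr_mono2' less_imp_le)

lemma epow_nonneg: "0 \<le> epow t p"
  by (simp add: epow_def)

lemma epow_le_powr_iff_pos:
  "0 < p \<Longrightarrow> 0 \<le> m \<Longrightarrow> 0 < u \<Longrightarrow> epow m p \<le> ereal (u powr p) \<longleftrightarrow> m \<le> u"
  by (auto simp: epow_def powr_le_powr_iff_pos)

lemma epow_le_powr_iff_neg:
  "p < 0 \<Longrightarrow> 0 \<le> m \<Longrightarrow> 0 < u \<Longrightarrow> epow m p \<le> ereal (u powr p) \<longleftrightarrow> u \<le> m"
  by (auto simp: epow_def powr_le_powr_iff_neg)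

lemma score_bound_iff_powr:
  fixes \<beta> c u :: real
  assumes "\<beta> \<noteq> 0" and "0 < u"
  shows "ereal c + ereal \<beta> * (1 - ereal u) \<le> 0 \<longleftrightarrow> epow (max 0 (c / \<beta> + 1)) \<beta> \<le> ereal (u powr \<beta>)"
proof -
  have to_real: "ereal c + ereal \<beta> * (1 - ereal u) \<le> 0 \<longleftrightarrow> c + \<beta> * (1 - u) \<le> 0"
    by (simp add: one_ereal_def)
  show ?thesis
  proof (cases "\<beta> > 0")
    case True
    have "c + \<beta> * (1 - u) \<le> 0 \<longleftrightarrow> max 0 (c / \<beta> + 1) \<le> u"
      using True \<open>0 < u\<close> by (auto simp: field_simps)
    with to_real show ?thesis
      using True \<open>0 < u\<close> by (simp add: epow_le_powr_iff_pos)
  next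
    case False
    then have "\<beta> < 0" using \<open>\<beta> \<noteq> 0\<close> by simp
    have "c + \<beta> * (1 - u) = \<beta> * (c / \<beta> + 1 - u)"
      using \<open>\<beta> < 0\<close> by (simp add: field_simps)
    then have "c + \<beta> * (1 - u) \<le> 0 \<longleftrightarrow> u \<le> max 0 (c / \<beta> + 1)"
      using \<open>\<beta> < 0\<close> \<open>0 < u\<close> by (auto simp: mult_le_0_iff)
    with to_real show ?thesis
      using \<open>\<beta> < 0\<close> \<open>0 < u\<close> by (simp add: epow_le_powr_iff_neg)
  qed
qed

lemma alpha_score_bound_iff:
  fixes \<beta> c :: real
  assumes "\<beta> \<noteq> 0" and "0 \<le> q y"
  shows "ereal c + alpha_score \<beta> q y \<le> 0 \<longleftrightarrow> epow (max 0 (c / \<beta> + 1)) \<beta> \<le> ereal (q y)"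
proof (cases "q y = 0")
  case True
  show ?thesis
  proof (cases "\<beta> > 0")
    case True
    have "ereal c + ereal \<beta> * (1 - 0) \<le> 0 \<longleftrightarrow> c / \<beta> + 1 \<le> 0"
      using True by (simp add: field_simps)
    with True \<open>q y = 0\<close> show ?thesis
      by (auto simp: alpha_score_def epow_def)
  next
    case False
    then have "\<beta> < 0" using \<open>\<beta> \<noteq> 0\<close> by simp
    then have "ereal \<beta> * (1 - \<infinity>) = \<infinity>"
      by (simp add: one_ereal_def)
    then have "\<not> ereal c + alpha_score \<beta> q y \<le> 0"
      using \<open>\<beta> < 0\<close> \<open>q y = 0\<close> by (simp add: alpha_score_def epow_def)
    moreover have "\<not> epow (max 0 (c / \<beta> + 1)) \<beta> \<le> ereal (q y)"
      using \<open>\<beta> < 0\<close> \<open>q y = 0\<close> by (auto simp: epow_def)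
    ultimately show ?thesis by blast
  qed
next
  case False
  define u where "u = q y powr (1 / \<beta>)"
  have "0 < q y" using False \<open>0 \<le> q y\<close> by simp
  then have "0 < u" and "epow (q y) (1 / \<beta>) = ereal u" and "q y = u powr \<beta>"
    using \<open>\<beta> \<noteq> 0\<close> by (simp_all add: u_def epow_def powr_powr)
  then show ?thesis
    using score_bound_iff_powr[OF \<open>\<beta> \<noteq> 0\<close> \<open>0 < u\<close>] by (simp add: alpha_score_def)
qed

lemma ex_Delta_ge_iff_sum_le_1:
  fixes g :: "'y::finite \<Rightarrow> ereal"
  assumes g_nonneg: "\<And>y. 0 \<le> g y"
  shows "(\<exists>q\<in>Delta. \<forall>y. g y \<le> ereal (q y)) \<longleftrightarrow> (\<Sum>y\<in>UNIV. g y) \<le> 1"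
proof
  assume "\<exists>q\<in>Delta. \<forall>y. g y \<le> ereal (q y)"
  then obtain q where "q \<in> Delta" and "\<forall>y. g y \<le> ereal (q y)" by blast
  then have "(\<Sum>y\<in>UNIV. g y) \<le> ereal (\<Sum>y\<in>UNIV. q y)"
    by (simp add: sum_mono flip: sum_ereal)
  also have "\<dots> = 1" using \<open>q \<in> Delta\<close> by (simp add: Delta_def)
  finally show "(\<Sum>y\<in>UNIV. g y) \<le> 1" .
next
  assume sum_le: "(\<Sum>y\<in>UNIV. g y) \<le> 1"
  have g_le_1: "g y \<le> 1" for y
  proof -
    have "g y \<le> (\<Sum>y\<in>UNIV. g y)"
      using g_nonneg by (intro sum_nonneg_leq_bound[of UNIV g _ y]) simp_all
    with sum_le show ?thesis by simp
  qed
  define r where "r y = real_of_ereal (g y)" for y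
  have g_r: "g y = ereal (r y)" for y
    using g_nonneg[of y] g_le_1[of y] by (cases "g y") (auto simp: r_def)
  have "(\<Sum>y\<in>UNIV. r y) \<le> 1"
    using sum_le by (simp add: g_r)
  define q where "q y = r y + (1 - (\<Sum>y\<in>UNIV. r y)) / CARD('y)" for y
  have "r y \<le> q y" for y
    using \<open>(\<Sum>y\<in>UNIV. r y) \<le> 1\<close> by (simp add: q_def)
  moreover have "0 \<le> r y" for y
    using g_nonneg[of y] by (simp add: g_r)
  moreover have "(\<Sum>y\<in>UNIV. q y) = 1"
    by (simp add: q_def sum.distrib)
  ultimately have "q \<in> Delta" and "\<forall>y. g y \<le> ereal (q y)"
    by (auto simp: Delta_def g_r intro: order_trans)
  then show "\<exists>q\<in>Delta. \<forall>y. g y \<le> ereal (q y)" by blast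
qed

lemma Lset_alpha_score_iff:
  fixes c :: "'y::finite \<Rightarrow> real"
  assumes "\<beta> \<noteq> 0"
  shows "c \<in> Lset (alpha_score \<beta>) \<longleftrightarrow> (\<Sum>y\<in>UNIV. epow (max 0 (c y / \<beta> + 1)) \<beta>) \<le> 1"
proof -
  have pointwise: "(\<forall>y. ereal (c y) + alpha_score \<beta> q y \<le> 0)
      \<longleftrightarrow> (\<forall>y. epow (max 0 (c y / \<beta> + 1)) \<beta> \<le> ereal (q y))" if "q \<in> Delta" for q
    using that by (simp add: Delta_def alpha_score_bound_iff[OF assms])
  have "c \<in> Lset (alpha_score \<beta>)
      \<longleftrightarrow> (\<exists>q\<in>Delta. \<forall>y. epow (max 0 (c y / \<beta> + 1)) \<beta> \<le> ereal (q y))"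
    unfolding Lset_def using pointwise by auto
  also have "\<dots> \<longleftrightarrow> (\<Sum>y\<in>UNIV. epow (max 0 (c y / \<beta> + 1)) \<beta>) \<le> 1"
    by (rule ex_Delta_ge_iff_sum_le_1) (rule epow_nonneg)
  finally show ?thesis .
qed

lemma alpha_loss_bound_iff:
  assumes "\<beta> \<noteq> 0" and "classif_rule h"
  shows "alpha_loss \<beta> h x y + ereal c \<le> 0 \<longleftrightarrow> epow (max 0 (c / \<beta> + 1)) \<beta> \<le> ereal (h x y)"
proof -
  have "0 \<le> h x y"
    using \<open>classif_rule h\<close> by (simp add: classif_rule_def Delta_def)
  then show ?thesis
    using alpha_score_bound_iff[OF \<open>\<beta> \<noteq> 0\<close>, of "h x" y c]
    by (simp add: alpha_loss_def add.commute)
qed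

lemma P_feasible_alpha_score:
  "\<beta> \<noteq> 0 \<Longrightarrow> P_feasible (alpha_score \<beta>) \<Phi> = Palpha_feasible \<beta> \<Phi>"
  by (auto simp: P_feasible_def Palpha_feasible_def Lset_alpha_score_iff)

theorem corollary3:
  fixes \<alpha> \<beta> :: real
    and \<Phi> :: "'x::finite \<Rightarrow> 'y::finite \<Rightarrow> real^'m"
    and a b :: "real^'m"
  assumes alpha: "0 < \<alpha>" "\<alpha> \<noteq> 1"
    and beta: "\<beta> = \<alpha> / (\<alpha> - 1)"
  shows "P_feasible (alpha_score \<beta>) \<Phi> = Palpha_feasible \<beta> \<Phi>
     \<and> (\<forall>s. is_solution (mrc_obj a b) (P_feasible (alpha_score \<beta>) \<Phi>) s
             \<longleftrightarrow> is_solution (mrc_obj a b) (Palpha_feasible \<beta> \<Phi>) s)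
     \<and> (\<forall>\<mu> \<eta> \<nu> h. is_solution (mrc_obj a b) (Palpha_feasible \<beta> \<Phi>) (\<mu>, \<eta>, \<nu>)
          \<longrightarrow> classif_rule h
          \<longrightarrow> ((\<forall>x y. alpha_loss \<beta> h x y + ereal (\<Phi> x y \<bullet> \<mu> + \<nu>) \<le> 0)
               \<longleftrightarrow> (\<forall>x y. ereal (h x y) \<ge> epow (max 0 ((\<Phi> x y \<bullet> \<mu> + \<nu>) / \<beta> + 1)) \<beta>)))"
proof -
  have "\<beta> \<noteq> 0"
    using alpha beta by simp
  then show ?thesis
    by (simp add: P_feasible_alpha_score alpha_loss_bound_iff)
qed

end
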